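(* Assume $\sum_n n^2\pi(n)<\infty$. If $R_0\le1$, then $m=0$ is the unique solution in $[0,\bar\pi]$ of $\bar\mu_\infty(m)=m$. If $R_0>1$, then there exists a unique $m_\star\in(0,\bar\pi]$ with $\bar\mu_\infty(m_\star)=m_\star$.
   Context: $\lambda_L,\lambda_G,\gamma>0$; $\pi$ a probability distribution on $\mathbb N$ with mean $\bar\pi$. For constant $m\in[0,\bar\pi]$, $\mu_\infty(m)$ is the unique stationary distribution (with first marginal $\pi$) of $(\nu,X_t(m))$ where $\nu\sim\pi$ and $X_t(m) = X_0 + P_{inf}\big( \int_{0}^{t} [ \lambda_L X_s(m) + \lambda_G \frac{\nu}{\bar\pi}m ](1-\frac{X_s(m)}{\nu}) ds \big) - P_{rec}\big( \int_{0}^{t} \gamma X_s(m) ds \big)$ with independent standard Poisson processes; $\bar\mu_\infty(m)$ is the mean of the second coordinate under $\mu_\infty(m)$. $R_0=\frac{\lambda_G}{\bar\pi}\mathbb E\big[\nu\int_0^\infty I(t)dt\,\big|\,I(0)=1\big]$ where $\nu\sim\pi$ and $I(t)=I(0)+P_{inf}\big(\int_0^t\lambda_L(1-I(s)/\nu)I(s)ds\big)-P_{rec}\big(\int_0^t\gamma I(s)ds\big)$. *)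

theory Defs
  imports "HOL-Probability.Probability"
begin

definition pibar :: "nat pmf \<Rightarrow> real" where
  "pibar P = measure_pmf.expectation P real"

definition birth_rate :: "real \<Rightarrow> real \<Rightarrow> real \<Rightarrow> real \<Rightarrow> nat \<Rightarrow> nat \<Rightarrow> real" where
  "birth_rate lL lG pb m n x = (lL * real x + lG * (real n / pb) * m) * (1 - real x / real n)"

definition death_rate :: "real \<Rightarrow> nat \<Rightarrow> real" where
  "death_rate g x = g * real x"

definition gen :: "real \<Rightarrow> real \<Rightarrow> real \<Rightarrow> real \<Rightarrow> real \<Rightarrow> nat \<Rightarrow> nat \<Rightarrow> nat \<Rightarrow> real" where
  "gen lL lG g pb m n x y =
     (if y = Suc x then birth_rate lL lG pb m n x
      else if Suc y = x then death_rate g x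
      else if y = x then - (birth_rate lL lG pb m n x + death_rate g x)
      else 0)"

definition is_stationary ::
  "real \<Rightarrow> real \<Rightarrow> real \<Rightarrow> nat pmf \<Rightarrow> real \<Rightarrow> (nat \<Rightarrow> nat \<Rightarrow> real) \<Rightarrow> bool" where
  "is_stationary lL lG g P m mu \<longleftrightarrow>
     (\<forall>n x. 0 \<le> mu n x) \<and>
     (\<forall>n x. n < x \<longrightarrow> mu n x = 0) \<and>
     (\<forall>n. (\<Sum>x\<le>n. mu n x) = pmf P n) \<and>
     (\<forall>n y. y \<le> n \<longrightarrow> (\<Sum>x\<le>n. mu n x * gen lL lG g (pibar P) m n x y) = 0)"

definition mu_inf :: "real \<Rightarrow> real \<Rightarrow> real \<Rightarrow> nat pmf \<Rightarrow> real \<Rightarrow> nat \<Rightarrow> nat \<Rightarrow> real" where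
  "mu_inf lL lG g P m = (THE mu. is_stationary lL lG g P m mu)"

definition mubar :: "real \<Rightarrow> real \<Rightarrow> real \<Rightarrow> nat pmf \<Rightarrow> real \<Rightarrow> real" where
  "mubar lL lG g P m = (\<Sum>n. \<Sum>x\<le>n. real x * mu_inf lL lG g P m n x)"

text \<open>Total jump rate of the within-household process I (global infection switched off).\<close>
definition hold_rate :: "real \<Rightarrow> real \<Rightarrow> nat \<Rightarrow> nat \<Rightarrow> real" where
  "hold_rate lL g n x = birth_rate lL 0 1 0 n x + death_rate g x"

text \<open>Embedded jump chain of I started at I(0)=1: probability of being at state x \<ge> 1
  after k jumps (mass absorbed at 0 is dropped, as it contributes nothing to the area).\<close>
fun jump_dist :: "real \<Rightarrow> real \<Rightarrow> nat \<Rightarrow> nat \<Rightarrow> nat \<Rightarrow> real" where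
  "jump_dist lL g n 0 x = (if x = 1 then 1 else 0)"
| "jump_dist lL g n (Suc k) y =
     (if y = 0 then 0 else
        (if 2 \<le> y then jump_dist lL g n k (y - 1) *
              (birth_rate lL 0 1 0 n (y - 1) / hold_rate lL g n (y - 1)) else 0)
        + jump_dist lL g n k (Suc y) *
              (death_rate g (Suc y) / hold_rate lL g n (Suc y)))"

text \<open>E[ integral_0^infty I(t) dt | I(0)=1, nu = n ]: sum over jumps of the state value times
  the expected holding time 1/q(x).\<close>
definition expected_area :: "real \<Rightarrow> real \<Rightarrow> nat \<Rightarrow> ennreal" where
  "expected_area lL g n =
     (\<Sum>k. \<Sum>x\<in>{1..Suc k}. ennreal (jump_dist lL g n k x * real x / hold_rate lL g n x))"

definition R0 :: "real \<Rightarrow> real \<Rightarrow> real \<Rightarrow> nat pmf \<Rightarrow> ennreal" where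
  "R0 lL lG g P =
     ennreal (lG / pibar P) * (\<Sum>n. ennreal (real n * pmf P n) * expected_area lL g n)"

end

theory Submission
  imports Defs
begin

text \<open>
  Given \<nu> = n, the chain X(m) is a birth-death chain on {0..n}, so its stationary law is
  fixed by detailed balance. Its weights are C(n,x) l^x (\<tau>)_x (rising factorial) with
  l = \<lambda>_L / (\<gamma> n) and \<tau> = \<kappa>_n m, \<kappa>_n = \<lambda>_G n / (\<pi>bar \<lambda>_L). Writing
  D_k(t) = \<Sum>_x C(k,x) l^x (t)_x, the mean household infection is \<tau> F_n(\<tau>) with
  F_n(t) = n l D_(n-1)(t + 1) / D_n(t), hence \<mu>bar(m) = m \<Sum>_n \<pi>(n) \<kappa>_n F_n(\<kappa>_n m).

  The three-term recurrence of D_k forces, by interlacing, all roots of D_k to be real and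
  negative; this makes F_n strictly decreasing, so \<mu>bar(m) / m is strictly decreasing on m > 0.
  The expected numbers of visits of the within-household jump chain obey detailed balance, which
  gives E \<integral> I = D_(n-1)(1) / \<gamma> and hence R_0 = \<Sum>_n \<pi>(n) \<kappa>_n F_n(0), the limit of
  \<mu>bar(m) / m as m \<rightarrow> 0. If R_0 \<le> 1 then \<mu>bar(m) < m for every m > 0. If R_0 > 1 then
  \<mu>bar(m) > m for small m > 0 while \<mu>bar(\<pi>bar) \<le> \<pi>bar, so the intermediate value theorem
  and the monotonicity of \<mu>bar(m) / m give exactly one positive fixed point.
\<close>

section \<open>Binomial rising-factorial polynomials\<close>

text \<open>The function D_m(t) of the overview, with l as a parameter; it is the normalising
  constant of the stationary law of a household (see \<open>stat_norm_eq\<close>).\<close>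

definition binom_rising :: "real \<Rightarrow> nat \<Rightarrow> real \<Rightarrow> real" where
  "binom_rising l m t = (\<Sum>x\<le>m. real (m choose x) * l ^ x * pochhammer t x)"

lemma binom_rising_0 [simp]: "binom_rising l 0 t = 1"
  by (simp add: binom_rising_def)

lemma binom_rising_at_0 [simp]: "binom_rising l m 0 = 1"
  by (simp add: binom_rising_def atMost_atLeast0 sum.atLeast_Suc_atMost pochhammer_0_left)

lemma continuous_on_binom_rising [continuous_intros]: "continuous_on S (binom_rising l m)"
  unfolding binom_rising_def by (intro continuous_intros)

lemma binom_rising_ge_1:
  assumes "l \<ge> 0" "t \<ge> 0"
  shows "binom_rising l m t \<ge> 1"
proof -
  have "binom_rising l m t = 1 + (\<Sum>x\<in>{1..m}. real (m choose x) * l ^ x * pochhammer t x)"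
    unfolding binom_rising_def by (simp add: atMost_atLeast0 sum.atLeast_Suc_atMost)
  moreover have "(\<Sum>x\<in>{1..m}. real (m choose x) * l ^ x * pochhammer t x) \<ge> 0"
    using assms by (intro sum_nonneg mult_nonneg_nonneg) (auto simp: pochhammer_prod prod_nonneg)
  ultimately show ?thesis by simp
qed

lemma binom_rising_Suc:
  "binom_rising l (Suc m) t = binom_rising l m t + l * t * binom_rising l m (t + 1)"
proof -
  have shift: "(\<Sum>x\<le>Suc m. f x) = f 0 + (\<Sum>x\<le>m. f (Suc x))" for f :: "nat \<Rightarrow> real"
    by (rule sum.atMost_Suc_shift)
  have "binom_rising l (Suc m) t
      = 1 + (\<Sum>x\<le>m. real (m choose Suc x) * l ^ Suc x * pochhammer t (Suc x))
          + (\<Sum>x\<le>m. real (m choose x) * l ^ Suc x * pochhammer t (Suc x))"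
    unfolding binom_rising_def shift by (simp add: sum.distrib algebra_simps)
  also have "1 + (\<Sum>x\<le>m. real (m choose Suc x) * l ^ Suc x * pochhammer t (Suc x))
      = binom_rising l m t"
  proof -
    have "binom_rising l m t = (\<Sum>x\<le>Suc m. real (m choose x) * l ^ x * pochhammer t x)"
      unfolding binom_rising_def by simp
    then show ?thesis unfolding shift by simp
  qed
  also have "(\<Sum>x\<le>m. real (m choose x) * l ^ Suc x * pochhammer t (Suc x))
      = l * t * binom_rising l m (t + 1)"
    unfolding binom_rising_def by (simp add: sum_distrib_left pochhammer_rec algebra_simps)
  finally show ?thesis .
qed

lemma binom_rising_first_moment:
  "(\<Sum>x\<le>Suc m. real x * real (Suc m choose x) * l ^ x * pochhammer t x)
   = real (Suc m) * l * t * binom_rising l m (t + 1)"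
proof -
  have "(\<Sum>x\<le>Suc m. real x * real (Suc m choose x) * l ^ x * pochhammer t x)
     = (\<Sum>x\<le>m. real (Suc x) * real (Suc m choose Suc x) * l ^ Suc x * pochhammer t (Suc x))"
    by (subst sum.atMost_Suc_shift) simp
  also have "\<dots> = (\<Sum>x\<le>m. real (Suc m) * real (m choose x) * l ^ Suc x * pochhammer t (Suc x))"
  proof (rule sum.cong[OF refl])
    fix x
    have "Suc x * (Suc m choose Suc x) = Suc m * (m choose x)"
      using binomial_absorption[of x "Suc m"] by simp
    then have "real (Suc x) * real (Suc m choose Suc x) = real (Suc m) * real (m choose x)"
      by (metis of_nat_mult)
    then show "real (Suc x) * real (Suc m choose Suc x) * l ^ Suc x * pochhammer t (Suc x)
       = real (Suc m) * real (m choose x) * l ^ Suc x * pochhammer t (Suc x)" by simp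
  qed
  also have "\<dots> = real (Suc m) * l * t * binom_rising l m (t + 1)"
    unfolding binom_rising_def by (simp add: sum_distrib_left pochhammer_rec algebra_simps)
  finally show ?thesis .
qed

lemma binom_rising_three_term:
  "binom_rising l (Suc (Suc m)) t
   = (1 + l * (t + real (Suc m))) * binom_rising l (Suc m) t - l * real (Suc m) * binom_rising l m t"
proof -
  let ?D = "binom_rising l (Suc m)"
  let ?a = "\<lambda>x. real (Suc m choose x) * l ^ x * pochhammer t x"
  have "t * ?D (t + 1) = (\<Sum>x\<le>Suc m. t * ?a x + real x * ?a x)"
    unfolding binom_rising_def sum_distrib_left
  proof (intro sum.cong refl)
    fix x
    have "t * (real (Suc m choose x) * l ^ x * pochhammer (t + 1) x)
        = (t * pochhammer (t + 1) x) * (real (Suc m choose x) * l ^ x)"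
      by (simp only: mult_ac)
    also have "t * pochhammer (t + 1) x = pochhammer t x * (t + real x)"
      by (metis pochhammer_rec pochhammer_rec' mult.commute)
    finally show "t * (real (Suc m choose x) * l ^ x * pochhammer (t + 1) x) = t * ?a x + real x * ?a x"
      by (simp add: algebra_simps)
  qed
  also have "\<dots> = t * ?D t + (\<Sum>x\<le>Suc m. real x * ?a x)"
    unfolding binom_rising_def sum.distrib sum_distrib_left ..
  also have "(\<Sum>x\<le>Suc m. real x * ?a x) = real (Suc m) * (?D t - binom_rising l m t)"
    using binom_rising_first_moment[of m l t] binom_rising_Suc[of l m t] by (simp add: mult.assoc)
  finally have shift: "t * ?D (t + 1) = t * ?D t + real (Suc m) * (?D t - binom_rising l m t)" .
  have "binom_rising l (Suc (Suc m)) t = ?D t + l * (t * ?D (t + 1))"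
    using binom_rising_Suc[of l "Suc m" t] by (simp add: mult.assoc)
  also have "\<dots> = ?D t + l * (t * ?D t + real (Suc m) * (?D t - binom_rising l m t))"
    by (simp only: shift)
  finally show ?thesis by (simp add: algebra_simps)
qed

lemma binom_rising_polynomial:
  assumes "l \<noteq> 0"
  obtains p where "degree p = m" "lead_coeff p = l ^ m" "\<And>t. poly p t = binom_rising l m t"
proof -
  have "\<exists>p. degree p = m \<and> lead_coeff p = l ^ m \<and> (\<forall>t. poly p t = binom_rising l m t)"
  proof (induction m)
    case 0
    show ?case by (intro exI[of _ 1]) simp
  next
    case (Suc m)
    then obtain p where p: "degree p = m" "lead_coeff p = l ^ m" "\<forall>t. poly p t = binom_rising l m t"
      by blast
    define q where "q = smult l ([:0, 1:] * pcompose p [:1, 1:])"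
    have "p \<noteq> 0" using p assms by auto
    moreover have "lead_coeff (pcompose p [:1, 1:]) = l ^ m"
      using lead_coeff_comp[of "[:1, 1:]" p] p by simp
    ultimately have q: "degree q = Suc m" "lead_coeff q = l ^ Suc m"
      using p assms by (simp_all add: q_def degree_mult_eq degree_pcompose lead_coeff_mult
          pcompose_eq_0_iff)
    have "poly (p + q) t = binom_rising l (Suc m) t" for t
      using p by (simp add: q_def poly_pcompose binom_rising_Suc algebra_simps)
    moreover have "degree (p + q) = Suc m" "lead_coeff (p + q) = l ^ Suc m"
      using degree_add_eq_right[of p q] lead_coeff_add_le[of p q] q p by simp_all
    ultimately show ?case by blast
  qed
  with that show ?thesis by blast
qed

section \<open>Real roots of the binomial rising-factorial polynomials\<close>

lemma prod_sign_count:
  fixes f :: "'a \<Rightarrow> real"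
  assumes "finite A" "\<And>i. i \<in> A \<Longrightarrow> f i \<noteq> 0"
  shows "(-1) ^ card {i \<in> A. f i < 0} * prod f A > 0"
  using assms
proof (induction A rule: finite_induct)
  case (insert a A)
  have IH: "(-1) ^ card {i \<in> A. f i < 0} * prod f A > 0"
    using insert by auto
  show ?case
  proof (cases "f a < 0")
    case True
    then have "{i \<in> insert a A. f i < 0} = insert a {i \<in> A. f i < 0}" by auto
    then have "(-1) ^ card {i \<in> insert a A. f i < 0} * prod f (insert a A)
        = ((-1) ^ card {i \<in> A. f i < 0} * prod f A) * (- f a)"
      using insert by simp
    then show ?thesis using IH True by (simp add: mult_pos_neg)
  next
    case False
    then have "{i \<in> insert a A. f i < 0} = {i \<in> A. f i < 0}" by auto
    moreover have "f a > 0" using False insert.prems by force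
    ultimately show ?thesis using IH insert by (simp add: mult.left_commute)
  qed
qed simp

lemma sign_prod_diff:
  fixes r :: "nat \<Rightarrow> real"
  assumes "j \<le> Suc m" "\<And>i. i < j \<Longrightarrow> r i < x" "\<And>i. j \<le> i \<Longrightarrow> i \<le> m \<Longrightarrow> x < r i"
  shows "(-1) ^ (Suc m - j) * (\<Prod>i\<le>m. x - r i) > 0"
proof -
  have "{i \<in> {..m}. x - r i < 0} = {j..m}"
    using assms by (force simp: not_less)
  moreover have "x - r i \<noteq> 0" if "i \<le> m" for i
    using assms(2,3)[of i] that by (cases "i < j") auto
  ultimately show ?thesis
    using prod_sign_count[of "{..m}" "\<lambda>i. x - r i"] assms(1) by simp
qed

lemma strict_mono_on_atMost_Suc:
  fixes r :: "nat \<Rightarrow> 'a :: order"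
  assumes "\<And>i. i < m \<Longrightarrow> r i < r (Suc i)"
  shows "strict_mono_on {..m} r"
proof (rule strict_mono_onI)
  fix i j assume "i \<in> {..m}" "j \<in> {..m}" "i < j"
  then show "r i < r j"
  proof (induction j)
    case (Suc j)
    then show ?case using assms[of j] by (cases "i = j") (auto intro: order.strict_trans)
  qed simp
qed

lemma roots_between_sign_changes:
  fixes f :: "real \<Rightarrow> real" and x :: "nat \<Rightarrow> real"
  assumes cont: "continuous_on UNIV f"
    and incr: "\<And>i. i < k \<Longrightarrow> x i < x (Suc i)"
    and sign: "\<And>i. i \<le> k \<Longrightarrow> (-1) ^ (k - i) * f (x i) > 0"
  obtains u where "\<And>i. i < k \<Longrightarrow> x i < u i \<and> u i < x (Suc i) \<and> f (u i) = 0"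
proof -
  have "\<exists>y. x i < y \<and> y < x (Suc i) \<and> f y = 0" if i: "i < k" for i
  proof -
    have "k - i = Suc (k - Suc i)" using i by simp
    then have opposite: "f (x i) * f (x (Suc i)) < 0"
      using sign[of i] sign[of "Suc i"] i
      by (cases "even (k - Suc i)") (auto simp: mult_less_0_iff)
    have cont': "continuous_on {x i..x (Suc i)} f"
      using cont by (rule continuous_on_subset) simp
    have "\<exists>y. x i \<le> y \<and> y \<le> x (Suc i) \<and> f y = 0"
    proof (cases "f (x i) < 0")
      case True
      then show ?thesis
        using opposite IVT'[OF _ _ _ cont'] incr[OF i] by (simp add: mult_less_0_iff)
    next
      case False
      then show ?thesis
        using opposite IVT2'[OF _ _ _ cont'] incr[OF i] by (simp add: mult_less_0_iff)
    qed
    then obtain y where y: "x i \<le> y" "y \<le> x (Suc i)" "f y = 0" by blast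
    then show ?thesis
      using opposite by (intro exI[of _ y]) (auto simp: order.order_iff_strict)
  qed
  then show ?thesis using that by metis
qed

text \<open>A real polynomial of degree \<open>k + 1\<close> with \<open>k\<close> known distinct roots splits: compare it
  with \<open>lead_coeff p * (t - s) * \<Prod>(t - u i)\<close> at the roots and at one further point, which
  determines \<open>s\<close>.\<close>

lemma real_poly_last_root:
  fixes p :: "real poly" and u :: "nat \<Rightarrow> real"
  assumes deg: "degree p = Suc k" and inj: "inj_on u {..<k}"
    and roots: "\<And>i. i < k \<Longrightarrow> poly p (u i) = 0"
  obtains s where "\<And>t. poly p t = lead_coeff p * (t - s) * (\<Prod>i<k. t - u i)"
proof -
  obtain z :: real where z: "z \<notin> u ` {..<k}"
    using ex_new_if_finite[OF infinite_UNIV_char_0] by blast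
  have nz: "(\<Prod>i<k. z - u i) \<noteq> 0" using z by auto
  have "p \<noteq> 0" using deg by auto
  then have lc: "lead_coeff p \<noteq> 0" by simp
  define s where "s = z - poly p z / (lead_coeff p * (\<Prod>i<k. z - u i))"
  define q where "q = smult (lead_coeff p) ([:- s, 1:] * (\<Prod>i<k. [:- u i, 1:]))"
  have poly_q: "poly q t = lead_coeff p * (t - s) * (\<Prod>i<k. t - u i)" for t
    by (simp add: q_def poly_prod algebra_simps)
  have L: "degree (\<Prod>i<k. [:- u i, 1:]) = k" "lead_coeff (\<Prod>i<k. [:- u i, 1:]) = 1"
    using lead_coeff_prod[of "\<lambda>i. [:- u i, 1:]" "{..<k}"]
    by (simp_all add: degree_prod_eq_sum_degree)
  then have "(\<Prod>i<k. [:- u i, 1:]) \<noteq> 0" by auto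
  then have "degree ([:- s, 1:] * (\<Prod>i<k. [:- u i, 1:])) = Suc k"
    using L by (subst degree_mult_eq) auto
  moreover have "lead_coeff ([:- s, 1:] * (\<Prod>i<k. [:- u i, 1:])) = 1"
    using L by (simp only: lead_coeff_mult) simp
  ultimately have "degree q = Suc k" "coeff q (Suc k) = lead_coeff p"
    using lc by (simp_all add: q_def)
  moreover have "card (insert z (u ` {..<k})) = Suc k"
    using z inj by (simp add: card_image)
  moreover have "poly p t = poly q t" if "t \<in> insert z (u ` {..<k})" for t
    using that roots nz lc by (auto simp: poly_q s_def)
  ultimately have "p = q"
    using deg by (intro poly_eqI_degree_lead_coeff[where A = "insert z (u ` {..<k})" and n = "Suc k"])
      simp_all
  then show ?thesis using that poly_q by blast
qed

lemma binom_rising_sign_at_root: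
  assumes l: "l > 0" and root: "binom_rising l (Suc m) x = 0"
    and sign: "(-1) ^ (m - i) * binom_rising l m x > 0" and i: "i \<le> m"
  shows "(-1) ^ (Suc m - i) * binom_rising l (Suc (Suc m)) x > 0"
proof -
  have "binom_rising l (Suc (Suc m)) x = - (l * real (Suc m)) * binom_rising l m x"
    using binom_rising_three_term[of l m x] root by simp
  moreover have "Suc m - i = Suc (m - i)" using i by simp
  ultimately have "(-1) ^ (Suc m - i) * binom_rising l (Suc (Suc m)) x
      = (l * real (Suc m)) * ((-1) ^ (m - i) * binom_rising l m x)"
    by simp
  then show ?thesis using sign l by simp
qed

text \<open>Interlacing: at the roots of \<open>D_(m+1)\<close> the three-term recurrence gives
  \<open>D_(m+2) = -l (m + 1) D_m\<close>, so \<open>D_(m+2)\<close> alternates in sign along them and is positive at 0.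
  This yields \<open>m + 1\<close> roots between consecutive roots of \<open>D_(m+1)\<close> and 0; the last root
  comes from \<open>real_poly_last_root\<close> and lies below the smallest root of \<open>D_(m+1)\<close>.\<close>

context
  fixes l :: real and m :: nat and r :: "nat \<Rightarrow> real"
  assumes l: "l > 0" and r_mono: "strict_mono_on {..m} r" and r_neg: "r m < 0"
    and r_fac: "\<And>t. binom_rising l (Suc m) t = l ^ Suc m * (\<Prod>i\<le>m. t - r i)"
    and r_sign: "\<And>i. i \<le> m \<Longrightarrow> (-1) ^ (m - i) * binom_rising l m (r i) > 0"
begin

private lemma r_le: "i \<le> j \<Longrightarrow> j \<le> m \<Longrightarrow> r i \<le> r j"
  using strict_mono_on_less_eq[OF r_mono] by simp

private lemma sign_at_r: "i \<le> m \<Longrightarrow> (-1) ^ (Suc m - i) * binom_rising l (Suc (Suc m)) (r i) > 0"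
  using r_fac r_sign by (intro binom_rising_sign_at_root l) (auto simp: prod_zero_iff)

private lemma interlaced_roots:
  obtains u where "\<And>i. i \<le> m \<Longrightarrow> r i < u i \<and> u i < (if i < m then r (Suc i) else 0)"
    "\<And>i. i \<le> m \<Longrightarrow> binom_rising l (Suc (Suc m)) (u i) = 0"
proof -
  define x where "x i = (if i \<le> m then r i else 0)" for i
  have "x i < x (Suc i)" if "i < Suc m" for i
    using strict_mono_onD[OF r_mono] r_neg that by (cases "i = m") (auto simp: x_def)
  moreover have "(-1) ^ (Suc m - i) * binom_rising l (Suc (Suc m)) (x i) > 0" if "i \<le> Suc m" for i
    using sign_at_r[of i] that by (cases "i \<le> m") (simp_all add: x_def)
  ultimately obtain u
    where u: "\<And>i. i < Suc m \<Longrightarrow> x i < u i \<and> u i < x (Suc i) \<and> binom_rising l (Suc (Suc m)) (u i) = 0"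
    using roots_between_sign_changes[OF continuous_on_binom_rising] by blast
  have "r i < u i \<and> u i < (if i < m then r (Suc i) else 0)" if "i \<le> m" for i
    using u[of i] that by (simp add: x_def Suc_le_eq)
  moreover have "binom_rising l (Suc (Suc m)) (u i) = 0" if "i \<le> m" for i
    using u[of i] that by simp
  ultimately show ?thesis by (rule that)
qed

private lemma last_root:
  assumes u: "\<And>i. i \<le> m \<Longrightarrow> r i < u i \<and> u i < (if i < m then r (Suc i) else 0)"
    "\<And>i. i \<le> m \<Longrightarrow> binom_rising l (Suc (Suc m)) (u i) = 0"
  obtains s where "s < r 0"
    "\<And>t. binom_rising l (Suc (Suc m)) t = l ^ Suc (Suc m) * (t - s) * (\<Prod>i\<le>m. t - u i)"
proof -
  have "strict_mono_on {..m} u"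
  proof (rule strict_mono_on_atMost_Suc)
    fix i assume "i < m"
    then have "u i < r (Suc i)" "r (Suc i) < u (Suc i)" using u(1)[of i] u(1)[of "Suc i"] by simp_all
    then show "u i < u (Suc i)" by linarith
  qed
  then have "inj_on u {..<Suc m}"
    using strict_mono_on_imp_inj_on by (auto simp: lessThan_Suc_atMost)
  moreover obtain p where "degree p = Suc (Suc m)" "lead_coeff p = l ^ Suc (Suc m)"
    "\<And>t. poly p t = binom_rising l (Suc (Suc m)) t"
    using binom_rising_polynomial[of l "Suc (Suc m)"] l by blast
  ultimately obtain s
    where s: "\<And>t. binom_rising l (Suc (Suc m)) t = l ^ Suc (Suc m) * (t - s) * (\<Prod>i\<le>m. t - u i)"
    using real_poly_last_root[of p "Suc m" u] u(2) by (auto simp: lessThan_Suc_atMost)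
  have "r 0 < u i" if "i \<le> m" for i
    using r_le[of 0 i] u(1)[of i] that by simp
  then have prod_sign: "(-1) ^ Suc m * (\<Prod>i\<le>m. r 0 - u i) > 0"
    using sign_prod_diff[of 0 m u "r 0"] by simp
  have "(-1) ^ Suc m * binom_rising l (Suc (Suc m)) (r 0) > 0" using sign_at_r[of 0] by simp
  also have "(-1) ^ Suc m * binom_rising l (Suc (Suc m)) (r 0)
      = ((-1) ^ Suc m * (\<Prod>i\<le>m. r 0 - u i)) * (l ^ Suc (Suc m) * (r 0 - s))"
    unfolding s by (simp only: mult_ac)
  finally have "l ^ Suc (Suc m) * (r 0 - s) > 0"
    using prod_sign zero_less_mult_pos by blast
  then have "s < r 0" using zero_less_mult_pos[of "l ^ Suc (Suc m)" "r 0 - s"] l by simp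
  with s show ?thesis using that by blast
qed

lemma binom_rising_roots_step:
  "\<exists>v. strict_mono_on {..Suc m} v \<and> v (Suc m) < 0
    \<and> (\<forall>t. binom_rising l (Suc (Suc m)) t = l ^ Suc (Suc m) * (\<Prod>i\<le>Suc m. t - v i))
    \<and> (\<forall>j\<le>Suc m. (-1) ^ (Suc m - j) * binom_rising l (Suc m) (v j) > 0)"
proof -
  obtain u where u: "\<And>i. i \<le> m \<Longrightarrow> r i < u i \<and> u i < (if i < m then r (Suc i) else 0)"
    "\<And>i. i \<le> m \<Longrightarrow> binom_rising l (Suc (Suc m)) (u i) = 0"
    using interlaced_roots by blast
  then obtain s where s_less: "s < r 0"
    and s: "\<And>t. binom_rising l (Suc (Suc m)) t = l ^ Suc (Suc m) * (t - s) * (\<Prod>i\<le>m. t - u i)"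
    using last_root[OF u] by blast
  define v where "v i = (if i = 0 then s else u (i - 1))" for i
  have "(\<Prod>i\<le>Suc m. t - v i) = (t - s) * (\<Prod>i\<le>m. t - u i)" for t
    by (simp add: prod.atMost_Suc_shift v_def del: prod.atMost_Suc)
  then have v_fac: "binom_rising l (Suc (Suc m)) t = l ^ Suc (Suc m) * (\<Prod>i\<le>Suc m. t - v i)" for t
    by (simp add: s mult.assoc)
  have v_sign: "(-1) ^ (Suc m - j) * binom_rising l (Suc m) (v j) > 0" if "j \<le> Suc m" for j
  proof -
    have below: "r i < v j" if "i < j" for i
    proof -
      obtain j' where j': "j = Suc j'" using \<open>i < j\<close> by (cases j) auto
      then show ?thesis using u(1)[of j'] r_le[of i j'] that \<open>j \<le> Suc m\<close> by (simp add: v_def)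
    qed
    have above: "v j < r i" if "j \<le> i" "i \<le> m" for i
    proof (cases j)
      case 0
      then show ?thesis using s_less r_le[of 0 i] that by (simp add: v_def)
    next
      case (Suc j')
      then show ?thesis using u(1)[of j'] r_le[of j i] that by (simp add: v_def split: if_splits)
    qed
    have "(-1) ^ (Suc m - j) * (\<Prod>i\<le>m. v j - r i) > 0"
      using below above \<open>j \<le> Suc m\<close> by (intro sign_prod_diff)
    then show ?thesis using l r_fac by (simp add: mult.left_commute)
  qed
  have "v i < v (Suc i)" if "i < Suc m" for i
  proof (cases i)
    case 0
    then show ?thesis using s_less u(1)[of 0] by (simp add: v_def)
  next
    case (Suc i')
    then show ?thesis using u(1)[of i'] u(1)[of i] that by (simp add: v_def)
  qed
  then have "strict_mono_on {..Suc m} v" by (rule strict_mono_on_atMost_Suc)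
  moreover have "v (Suc m) < 0" using u(1)[of m] by (simp add: v_def)
  ultimately show ?thesis using v_fac v_sign by blast
qed

end

lemma binom_rising_real_roots:
  assumes l: "l > 0"
  shows "\<exists>r. strict_mono_on {..m} r \<and> r m < 0
    \<and> (\<forall>t. binom_rising l (Suc m) t = l ^ Suc m * (\<Prod>i\<le>m. t - r i))
    \<and> (\<forall>i\<le>m. (-1) ^ (m - i) * binom_rising l m (r i) > 0)"
proof (induction m)
  case 0
  have "binom_rising l 1 t = l * (t - (- 1 / l))" for t
    using binom_rising_Suc[of l 0 t] l by (simp add: field_simps)
  then show ?case using l by (intro exI[of _ "\<lambda>_. - 1 / l"]) (auto simp: strict_mono_on_def)
next
  case (Suc m)
  then show ?case using binom_rising_roots_step[OF l] by blast
qed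

lemma binom_rising_factorization:
  assumes "l > 0"
  obtains \<rho> where "\<And>i. i < m \<Longrightarrow> \<rho> i > 0"
    "\<And>t. binom_rising l m t = l ^ m * (\<Prod>i<m. t + \<rho> i)"
proof (cases m)
  case 0
  then show ?thesis using that by simp
next
  case (Suc k)
  obtain r where r: "strict_mono_on {..k} r" "r k < 0"
    "\<And>t. binom_rising l (Suc k) t = l ^ Suc k * (\<Prod>i\<le>k. t - r i)"
    using binom_rising_real_roots[OF assms, of k] by blast
  have "r i < 0" if "i \<le> k" for i
    using strict_mono_on_less_eq[OF r(1), of i k] r(2) that by simp
  then show ?thesis
    using that[of "\<lambda>i. - r i"] r(3) Suc by (simp add: lessThan_Suc_atMost)
qed

lemma binom_rising_shift_ratio_mono:
  assumes l: "l > 0" and st: "0 \<le> s" "s \<le> t"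
  shows "binom_rising l m s * binom_rising l m (t + 1)
       \<le> binom_rising l m t * binom_rising l m (s + 1)"
proof -
  obtain \<rho> where \<rho>: "\<And>i. i < m \<Longrightarrow> \<rho> i > 0"
    "\<And>t. binom_rising l m t = l ^ m * (\<Prod>i<m. t + \<rho> i)"
    using binom_rising_factorization[OF l] by blast
  have factor: "(s + \<rho> i) * (t + 1 + \<rho> i) \<le> (t + \<rho> i) * (s + 1 + \<rho> i)" for i
  proof -
    have "(t + \<rho> i) * (s + 1 + \<rho> i) - (s + \<rho> i) * (t + 1 + \<rho> i) = t - s"
      by (simp add: algebra_simps)
    then show ?thesis using st by simp
  qed
  have "(\<Prod>i<m. (s + \<rho> i) * (t + 1 + \<rho> i)) \<le> (\<Prod>i<m. (t + \<rho> i) * (s + 1 + \<rho> i))"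
  proof (intro prod_mono conjI factor)
    fix i assume "i \<in> {..<m}"
    then show "0 \<le> (s + \<rho> i) * (t + 1 + \<rho> i)"
      using \<rho>(1)[of i] st by (intro mult_nonneg_nonneg) auto
  qed
  then show ?thesis
    using l by (simp add: \<rho>(2) prod.distrib mult_ac mult_left_mono)
qed

lemma binom_rising_quotient_strict_decreasing:
  assumes l: "l > 0" and st: "0 \<le> s" "s < t"
  shows "binom_rising l m (t + 1) / binom_rising l (Suc m) t
       < binom_rising l m (s + 1) / binom_rising l (Suc m) s"
proof -
  let ?D = "binom_rising l m"
  have pos: "?D (s + 1) \<ge> 1" "?D (t + 1) \<ge> 1" "binom_rising l (Suc m) s \<ge> 1"
    "binom_rising l (Suc m) t \<ge> 1"
    using l st by (simp_all add: binom_rising_ge_1)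
  have "?D (s + 1) * binom_rising l (Suc m) t - ?D (t + 1) * binom_rising l (Suc m) s
      = (?D (s + 1) * ?D t - ?D (t + 1) * ?D s) + l * (t - s) * ?D (s + 1) * ?D (t + 1)"
    unfolding binom_rising_Suc by (simp add: algebra_simps)
  moreover have "?D (s + 1) * ?D t - ?D (t + 1) * ?D s \<ge> 0"
    using binom_rising_shift_ratio_mono[OF l st(1), of t m] st by (simp add: mult.commute)
  moreover have "l * (t - s) * ?D (s + 1) * ?D (t + 1) > 0"
    using l st pos by simp
  ultimately have "?D (t + 1) * binom_rising l (Suc m) s < ?D (s + 1) * binom_rising l (Suc m) t"
    by linarith
  then show ?thesis using pos by (simp add: divide_simps)
qed

section \<open>The stationary distribution\<close>

lemma birth_rate_top [simp]: "birth_rate lL lG pb m n n = 0"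
  by (cases "n = 0") (simp_all add: birth_rate_def)

lemma death_rate_0 [simp]: "death_rate g 0 = 0"
  by (simp add: death_rate_def)

lemma birth_rate_nonneg:
  assumes "lL \<ge> 0" "lG \<ge> 0" "pb \<ge> 0" "m \<ge> 0" "x \<le> n"
  shows "birth_rate lL lG pb m n x \<ge> 0"
proof -
  have "1 - real x / real n \<ge> 0"
    using assms by (cases "n = 0") (auto simp: field_simps)
  then show ?thesis using assms unfolding birth_rate_def
    by (intro mult_nonneg_nonneg add_nonneg_nonneg) auto
qed

lemma gen_balance_sum:
  assumes "y \<le> n"
  shows "(\<Sum>x\<le>n. f x * gen lL lG g pb m n x y) =
     (if 0 < y then f (y - 1) * birth_rate lL lG pb m n (y - 1) else 0)
   + (if y < n then f (Suc y) * death_rate g (Suc y) else 0)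
   - f y * (birth_rate lL lG pb m n y + death_rate g y)"
proof -
  let ?B = "birth_rate lL lG pb m n" and ?D = "death_rate g"
  have pick: "(\<Sum>x\<le>n. f x * (if x = a then c x else 0)) = (if a \<le> n then f a * c a else 0)"
    for a and c :: "nat \<Rightarrow> real"
  proof -
    have "(\<Sum>x\<le>n. f x * (if x = a then c x else 0)) = (\<Sum>x\<le>n. if x = a then f a * c a else 0)"
      by (intro sum.cong) auto
    then show ?thesis by (simp add: sum.delta)
  qed
  have "f x * gen lL lG g pb m n x y
      = f x * (if x = y - 1 then (if 0 < y then ?B x else 0) else 0)
      + f x * (if x = Suc y then ?D x else 0) - f x * (if x = y then ?B x + ?D x else 0)" for x
    unfolding gen_def by (auto simp: algebra_simps)
  then have "(\<Sum>x\<le>n. f x * gen lL lG g pb m n x y) =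
     (\<Sum>x\<le>n. f x * (if x = y - 1 then (if 0 < y then ?B x else 0) else 0))
   + (\<Sum>x\<le>n. f x * (if x = Suc y then ?D x else 0))
   - (\<Sum>x\<le>n. f x * (if x = y then ?B x + ?D x else 0))"
    by (simp add: sum.distrib sum_subtractf)
  also have "\<dots> = (if 0 < y then f (y - 1) * ?B (y - 1) else 0)
   + (if y < n then f (Suc y) * ?D (Suc y) else 0) - f y * (?B y + ?D y)"
    unfolding pick using assms by auto
  finally show ?thesis .
qed

definition stat_weight :: "real \<Rightarrow> real \<Rightarrow> real \<Rightarrow> real \<Rightarrow> real \<Rightarrow> nat \<Rightarrow> nat \<Rightarrow> real" where
  "stat_weight lL lG g pb m n x = (\<Prod>k<x. birth_rate lL lG pb m n k / death_rate g (Suc k))"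

definition stat_norm :: "real \<Rightarrow> real \<Rightarrow> real \<Rightarrow> real \<Rightarrow> real \<Rightarrow> nat \<Rightarrow> real" where
  "stat_norm lL lG g pb m n = (\<Sum>x\<le>n. stat_weight lL lG g pb m n x)"

definition stat_dist :: "real \<Rightarrow> real \<Rightarrow> real \<Rightarrow> nat pmf \<Rightarrow> real \<Rightarrow> nat \<Rightarrow> nat \<Rightarrow> real" where
  "stat_dist lL lG g P m n x =
     (if x \<le> n then pmf P n * stat_weight lL lG g (pibar P) m n x / stat_norm lL lG g (pibar P) m n
      else 0)"

lemma stat_weight_0 [simp]: "stat_weight lL lG g pb m n 0 = 1"
  by (simp add: stat_weight_def)

lemma stat_weight_Suc:
  "stat_weight lL lG g pb m n (Suc x)
   = stat_weight lL lG g pb m n x * birth_rate lL lG pb m n x / death_rate g (Suc x)"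
  by (simp add: stat_weight_def)

lemma pibar_nonneg: "pibar P \<ge> 0"
  unfolding pibar_def by simp

context
  fixes lL lG g m :: real
  assumes lL: "lL \<ge> 0" and lG: "lG \<ge> 0" and g: "g > 0" and m: "m \<ge> 0"
begin

lemma stat_weight_nonneg:
  assumes "pb \<ge> 0" "x \<le> n"
  shows "stat_weight lL lG g pb m n x \<ge> 0"
  unfolding stat_weight_def using assms lL lG g m
  by (intro prod_nonneg) (auto intro!: divide_nonneg_pos birth_rate_nonneg simp: death_rate_def)

lemma stat_norm_pos:
  assumes "pb \<ge> 0"
  shows "stat_norm lL lG g pb m n > 0"
proof -
  have "stat_norm lL lG g pb m n = 1 + (\<Sum>x\<in>{1..n}. stat_weight lL lG g pb m n x)"
    unfolding stat_norm_def by (simp add: atMost_atLeast0 sum.atLeast_Suc_atMost)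
  moreover have "(\<Sum>x\<in>{1..n}. stat_weight lL lG g pb m n x) \<ge> 0"
    using assms by (intro sum_nonneg stat_weight_nonneg) auto
  ultimately show ?thesis by simp
qed

lemma stat_dist_stationary: "is_stationary lL lG g P m (stat_dist lL lG g P m)"
proof -
  let ?B = "birth_rate lL lG (pibar P) m" and ?D = "death_rate g"
  let ?Z = "stat_norm lL lG g (pibar P) m" and ?\<mu> = "stat_dist lL lG g P m"
  have Z: "?Z n > 0" for n using stat_norm_pos[OF pibar_nonneg] .
  have detailed_balance: "?\<mu> n (Suc x) * ?D (Suc x) = ?\<mu> n x * ?B n x" if "x < n" for n x
  proof -
    have "?D (Suc x) > 0" using g by (simp add: death_rate_def)
    then show ?thesis using that unfolding stat_dist_def stat_weight_Suc by (simp add: field_simps)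
  qed
  show ?thesis unfolding is_stationary_def
  proof (intro conjI allI impI)
    fix n x show "0 \<le> ?\<mu> n x"
      unfolding stat_dist_def using Z[of n] stat_weight_nonneg[OF pibar_nonneg]
      by (auto intro!: divide_nonneg_pos mult_nonneg_nonneg)
  next
    fix n x :: nat assume "n < x" then show "?\<mu> n x = 0" by (simp add: stat_dist_def)
  next
    fix n
    have "(\<Sum>x\<le>n. ?\<mu> n x) = pmf P n * ?Z n / ?Z n"
      unfolding stat_dist_def stat_norm_def
      by (simp add: sum_divide_distrib[symmetric] sum_distrib_left)
    then show "(\<Sum>x\<le>n. ?\<mu> n x) = pmf P n" using Z[of n] by simp
  next
    fix n y :: nat assume y: "y \<le> n"
    have in_flow: "(if 0 < y then ?\<mu> n (y - 1) * ?B n (y - 1) else 0) = ?\<mu> n y * ?D y"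
      using detailed_balance[of "y - 1" n] y by (cases y) simp_all
    have out_flow: "(if y < n then ?\<mu> n (Suc y) * ?D (Suc y) else 0) = ?\<mu> n y * ?B n y"
      using detailed_balance[of y n] y by (cases "y < n") auto
    show "(\<Sum>x\<le>n. ?\<mu> n x * gen lL lG g (pibar P) m n x y) = 0"
      unfolding gen_balance_sum[OF y] in_flow out_flow by (simp add: algebra_simps)
  qed
qed

text \<open>On each fibre \<open>{0..n}\<close> the balance equations of a birth--death chain force detailed
  balance by induction from the boundary state 0.\<close>
lemma stationary_eq_stat_dist:
  assumes "is_stationary lL lG g P m \<mu>"
  shows "\<mu> = stat_dist lL lG g P m"
proof (intro ext)
  fix n x
  let ?B = "birth_rate lL lG (pibar P) m" and ?D = "death_rate g"
  let ?w = "stat_weight lL lG g (pibar P) m" and ?Z = "stat_norm lL lG g (pibar P) m"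
  have zero: "\<And>x. n < x \<Longrightarrow> \<mu> n x = 0" and mass: "(\<Sum>x\<le>n. \<mu> n x) = pmf P n"
    and balance: "\<And>y. y \<le> n \<Longrightarrow> (\<Sum>x\<le>n. \<mu> n x * gen lL lG g (pibar P) m n x y) = 0"
    using assms unfolding is_stationary_def by auto
  have D_pos: "?D (Suc k) > 0" for k using g by (simp add: death_rate_def)
  have detailed_balance: "\<mu> n (Suc x) * ?D (Suc x) = \<mu> n x * ?B n x" if "x < n" for x
    using that
  proof (induction x)
    case 0
    then show ?case using balance[of 0] unfolding gen_balance_sum[OF le0] by simp
  next
    case (Suc x)
    then have "\<mu> n x * ?B n x + \<mu> n (Suc (Suc x)) * ?D (Suc (Suc x))
        - \<mu> n (Suc x) * (?B n (Suc x) + ?D (Suc x)) = 0"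
      using balance[of "Suc x"] gen_balance_sum[of "Suc x" n "\<mu> n"] by simp
    moreover have "\<mu> n (Suc x) * ?D (Suc x) = \<mu> n x * ?B n x" using Suc by simp
    ultimately show ?case by (simp add: algebra_simps)
  qed
  have product_form: "\<mu> n x = \<mu> n 0 * ?w n x" if "x \<le> n" for x
    using that
  proof (induction x)
    case (Suc x)
    then have "\<mu> n (Suc x) = \<mu> n x * ?B n x / ?D (Suc x)"
      using detailed_balance[of x] D_pos[of x] by (simp add: field_simps)
    then show ?case using Suc by (simp add: stat_weight_Suc)
  qed simp
  have "pmf P n = \<mu> n 0 * ?Z n"
    unfolding mass[symmetric] stat_norm_def sum_distrib_left by (intro sum.cong refl product_form) simp
  then have "\<mu> n 0 = pmf P n / ?Z n"
    using stat_norm_pos[OF pibar_nonneg[of P], of n] by (simp add: field_simps)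
  then show "\<mu> n x = stat_dist lL lG g P m n x"
    unfolding stat_dist_def using product_form[of x] zero[of x] by (cases "x \<le> n") simp_all
qed

lemma mu_inf_eq_stat_dist: "mu_inf lL lG g P m = stat_dist lL lG g P m"
  unfolding mu_inf_def
  using stat_dist_stationary stationary_eq_stat_dist by (rule the_equality)

end

section \<open>Mean number of infected individuals in a household\<close>

text \<open>With \<open>l = local_ratio lL g n\<close> and \<open>\<tau> = global_scale lL lG pb n * m\<close>, the stationary
  weights of a household of size \<open>n\<close> are \<open>C(n,x) l^x (\<tau>)_x\<close> (\<open>stat_weight_eq\<close>), and the
  mean \<open>hh_mean\<close> equals \<open>\<tau> * hh_slope \<tau>\<close>; \<open>hh_slope\<close> is the function F_n of the overview.\<close>

definition local_ratio :: "real \<Rightarrow> real \<Rightarrow> nat \<Rightarrow> real" where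
  "local_ratio lL g n = lL / (g * real n)"

definition global_scale :: "real \<Rightarrow> real \<Rightarrow> real \<Rightarrow> nat \<Rightarrow> real" where
  "global_scale lL lG pb n = lG * real n / (pb * lL)"

definition hh_mean :: "real \<Rightarrow> real \<Rightarrow> real \<Rightarrow> real \<Rightarrow> real \<Rightarrow> nat \<Rightarrow> real" where
  "hh_mean lL lG g pb m n =
     (\<Sum>x\<le>n. real x * stat_weight lL lG g pb m n x) / stat_norm lL lG g pb m n"

definition hh_slope :: "real \<Rightarrow> real \<Rightarrow> nat \<Rightarrow> real \<Rightarrow> real" where
  "hh_slope lL g n t = real n * local_ratio lL g n
     * binom_rising (local_ratio lL g n) (n - 1) (t + 1) / binom_rising (local_ratio lL g n) n t"

lemma binomial_Suc_mult_real:
  "real (n choose x) * (real n - real x) = real (n choose Suc x) * real (Suc x)"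
proof (cases "x \<le> n")
  case True
  have "Suc x * (n choose Suc x) = (n - x) * (n choose x)"
    using binomial_absorption[of x n] binomial_absorb_comp[of n x] by simp
  then have "real (Suc x) * real (n choose Suc x) = real (n - x) * real (n choose x)"
    by (metis of_nat_mult)
  then show ?thesis using True by (simp add: of_nat_diff algebra_simps)
next
  case False
  then show ?thesis by (simp add: binomial_eq_0)
qed

lemma hh_slope_0 [simp]: "hh_slope lL g 0 t = 0"
  by (simp add: hh_slope_def)

context
  fixes lL g :: real and n :: nat
  assumes lL: "lL > 0" and g: "g > 0" and n: "n \<ge> 1"
begin

lemma local_ratio_pos: "local_ratio lL g n > 0"
  using lL g n by (simp add: local_ratio_def)

lemma stat_weight_eq:
  "stat_weight lL lG g pb m n x
   = real (n choose x) * local_ratio lL g n ^ x * pochhammer (global_scale lL lG pb n * m) x"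
proof (induction x)
  case (Suc x)
  let ?l = "local_ratio lL g n" and ?t = "global_scale lL lG pb n * m"
  have step: "birth_rate lL lG pb m n x / death_rate g (Suc x)
      = ?l * (?t + real x) * (real n - real x) / real (Suc x)"
    using lL g n unfolding birth_rate_def death_rate_def local_ratio_def global_scale_def
    by (simp add: field_simps)
  have "stat_weight lL lG g pb m n (Suc x)
      = real (n choose x) * ?l ^ x * pochhammer ?t x
        * (?l * (?t + real x) * (real n - real x) / real (Suc x))"
    unfolding stat_weight_Suc Suc.IH times_divide_eq_right[symmetric] step ..
  also have "\<dots> = (real (n choose x) * (real n - real x)) * ?l ^ Suc x
        * (pochhammer ?t x * (?t + real x)) / real (Suc x)"
    by (simp add: algebra_simps)
  also have "\<dots> = real (n choose Suc x) * ?l ^ Suc x * pochhammer ?t (Suc x)"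
    unfolding binomial_Suc_mult_real pochhammer_rec'[of ?t x] by (simp del: of_nat_Suc)
  finally show ?case .
qed simp

lemma stat_norm_eq:
  "stat_norm lL lG g pb m n = binom_rising (local_ratio lL g n) n (global_scale lL lG pb n * m)"
  unfolding stat_norm_def binom_rising_def stat_weight_eq ..

lemma hh_mean_eq:
  "hh_mean lL lG g pb m n
   = global_scale lL lG pb n * m * hh_slope lL g n (global_scale lL lG pb n * m)"
proof -
  let ?l = "local_ratio lL g n" and ?t = "global_scale lL lG pb n * m"
  obtain k where k: "n = Suc k" using n by (cases n) auto
  have "(\<Sum>x\<le>n. real x * stat_weight lL lG g pb m n x)
      = real n * ?l * ?t * binom_rising ?l (n - 1) (?t + 1)"
    unfolding stat_weight_eq using binom_rising_first_moment[of k ?l ?t] k by (simp add: mult.assoc)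
  then show ?thesis unfolding hh_mean_def hh_slope_def stat_norm_eq by simp
qed

lemma hh_slope_pos: "t \<ge> 0 \<Longrightarrow> hh_slope lL g n t > 0"
  unfolding hh_slope_def using local_ratio_pos n
  by (intro divide_pos_pos mult_pos_pos) (auto intro: less_le_trans[OF _ binom_rising_ge_1])

lemma hh_slope_at_0:
  "hh_slope lL g n 0 = real n * local_ratio lL g n * binom_rising (local_ratio lL g n) (n - 1) 1"
  by (simp add: hh_slope_def)

lemma hh_slope_strict_decreasing: "0 \<le> s \<Longrightarrow> s < t \<Longrightarrow> hh_slope lL g n t < hh_slope lL g n s"
  unfolding hh_slope_def times_divide_eq_right[symmetric]
  using binom_rising_quotient_strict_decreasing[OF local_ratio_pos, of s t "n - 1"] n local_ratio_pos
  by (intro mult_strict_left_mono) simp_all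

lemma hh_slope_decreasing: "0 \<le> s \<Longrightarrow> s \<le> t \<Longrightarrow> hh_slope lL g n t \<le> hh_slope lL g n s"
  using hh_slope_strict_decreasing by (cases "s = t") (auto simp: less_imp_le)

lemma hh_slope_mult_le: "t \<ge> 0 \<Longrightarrow> t * hh_slope lL g n t \<le> real n"
proof -
  assume t: "t \<ge> 0"
  let ?l = "local_ratio lL g n"
  have D: "binom_rising ?l n t = binom_rising ?l (n - 1) t + ?l * t * binom_rising ?l (n - 1) (t + 1)"
    using binom_rising_Suc[of ?l "n - 1" t] n by simp
  have pos: "binom_rising ?l (n - 1) t \<ge> 1" "binom_rising ?l n t \<ge> 1"
    using local_ratio_pos t by (simp_all add: binom_rising_ge_1)
  have "t * hh_slope lL g n t = real n * (?l * t * binom_rising ?l (n - 1) (t + 1)) / binom_rising ?l n t"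
    unfolding hh_slope_def by (simp add: algebra_simps)
  also have "\<dots> \<le> real n * binom_rising ?l n t / binom_rising ?l n t"
    using pos by (intro divide_right_mono mult_left_mono) (auto simp: D)
  also have "\<dots> = real n" using pos by simp
  finally show ?thesis .
qed

lemma continuous_on_hh_slope: "continuous_on {0..} (hh_slope lL g n)"
proof -
  have "binom_rising (local_ratio lL g n) n t \<noteq> 0" if "t \<ge> 0" for t
    using binom_rising_ge_1[of "local_ratio lL g n" t n] local_ratio_pos that by simp
  then show ?thesis unfolding hh_slope_def
    by (intro continuous_intros continuous_on_compose2[OF continuous_on_binom_rising[of UNIV]]) auto
qed

end

section \<open>Expected area under the within-household epidemic\<close>

context
  fixes lL g :: real and n :: nat
  assumes lL: "lL > 0" and g: "g > 0" and n: "n \<ge> 1"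
begin

text \<open>\<open>V K x\<close> is the expected number of visits of the jump chain to \<open>x\<close> among its first
  \<open>K\<close> jumps, and \<open>visits x\<close> its limit.  Summing the one-step recursion of \<open>jump_dist\<close> shows
  that the net flux \<open>V K y * p_up y - V K (y + 1) * p_down (y + 1)\<close> across an edge equals
  the mass still above \<open>y\<close> after \<open>K\<close> jumps; this mass tends to 0, so \<open>visits\<close> satisfies
  the detailed balance relations of the jump chain.\<close>

private abbreviation "J \<equiv> jump_dist lL g n"
private definition "p_up x = birth_rate lL 0 1 0 n x / hold_rate lL g n x"
private definition "p_down x = death_rate g x / hold_rate lL g n x"
private definition "V K x = (\<Sum>k<K. J k x)"

private lemma hold_rate_pos: "1 \<le> x \<Longrightarrow> x \<le> n \<Longrightarrow> hold_rate lL g n x > 0"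
  unfolding hold_rate_def death_rate_def using birth_rate_nonneg[of lL 0 1 0 x n] lL g
  by (intro add_nonneg_pos) auto

private lemma p_up_nonneg: "1 \<le> x \<Longrightarrow> x \<le> n \<Longrightarrow> p_up x \<ge> 0"
  unfolding p_up_def using hold_rate_pos birth_rate_nonneg[of lL 0 1 0 x n] lL
  by (simp add: less_imp_le)

private lemma p_down_pos: "1 \<le> x \<Longrightarrow> x \<le> n \<Longrightarrow> p_down x > 0"
  unfolding p_down_def death_rate_def using hold_rate_pos g by simp

private lemma p_up_add_p_down: "1 \<le> x \<Longrightarrow> x \<le> n \<Longrightarrow> p_up x + p_down x = 1"
  unfolding p_up_def p_down_def using hold_rate_pos[of x]
  by (simp add: hold_rate_def add_divide_distrib[symmetric])

private lemma p_up_top: "p_up n = 0"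
  unfolding p_up_def by simp

private lemma J_Suc:
  "J (Suc k) x = (if x = 0 then 0 else
     (if 2 \<le> x then J k (x - 1) * p_up (x - 1) else 0) + J k (Suc x) * p_down (Suc x))"
  by (simp add: p_up_def p_down_def)

private lemma jump_dist_support:
  "J k x \<ge> 0 \<and> (x = 0 \<longrightarrow> J k x = 0) \<and> (n < x \<longrightarrow> J k x = 0) \<and> (Suc k < x \<longrightarrow> J k x = 0)"
proof (induction k arbitrary: x)
  case 0
  then show ?case using n by auto
next
  case (Suc k)
  have up: "(if 2 \<le> x then J k (x - 1) * p_up (x - 1) else 0) \<ge> 0"
    using Suc.IH[of "x - 1"] p_up_nonneg[of "x - 1"] by (cases "2 \<le> x \<and> x - 1 \<le> n") auto
  have down: "J k (Suc x) * p_down (Suc x) \<ge> 0"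
    using Suc.IH[of "Suc x"] p_down_pos[of "Suc x"] by (cases "Suc x \<le> n") auto
  have up_0: "(if 2 \<le> x then J k (x - 1) * p_up (x - 1) else 0) = 0"
    if "n < x \<or> Suc (Suc k) < x"
    using Suc.IH[of "x - 1"] that p_up_top by (cases "x - 1 = n") auto
  have down_0: "J k (Suc x) * p_down (Suc x) = 0" if "n < x \<or> Suc (Suc k) < x"
    using Suc.IH[of "Suc x"] that by auto
  show ?case unfolding J_Suc using up down up_0 down_0 by auto
qed

private lemma jump_dist_nonneg: "J k x \<ge> 0"
  using jump_dist_support by blast

private lemma jump_dist_above_n: "n < x \<Longrightarrow> J k x = 0"
  using jump_dist_support by blast

private lemma jump_dist_above_steps: "Suc k < x \<Longrightarrow> J k x = 0"
  using jump_dist_support by blast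

private lemma V_above_n: "n < x \<Longrightarrow> V K x = 0"
  unfolding V_def using jump_dist_above_n by simp

private lemma V_split: "1 \<le> z \<Longrightarrow> V K z = V K z * p_up z + V K z * p_down z"
  using p_up_add_p_down[of z] V_above_n[of z K]
  by (cases "z \<le> n") (simp_all flip: distrib_left)

private lemma V_Suc:
  assumes "1 \<le> z"
  shows "V (Suc K) z = (if z = 1 then 1 else 0)
    + (if 2 \<le> z then V K (z - 1) * p_up (z - 1) else 0) + V K (Suc z) * p_down (Suc z)"
proof -
  have "V (Suc K) z = J 0 z + (\<Sum>k<K. J (Suc k) z)"
    unfolding V_def by (subst sum.lessThan_Suc_shift) simp
  also have "(\<Sum>k<K. J (Suc k) z)
      = (\<Sum>k<K. (if 2 \<le> z then J k (z - 1) * p_up (z - 1) else 0) + J k (Suc z) * p_down (Suc z))"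
    using assms by (intro sum.cong) (simp_all add: J_Suc del: jump_dist.simps)
  also have "\<dots> = (if 2 \<le> z then V K (z - 1) * p_up (z - 1) else 0) + V K (Suc z) * p_down (Suc z)"
    unfolding V_def by (simp add: sum.distrib sum_distrib_right)
  finally show ?thesis using assms by simp
qed

private lemma partial_mass_eq:
  "1 \<le> y \<Longrightarrow>
   (\<Sum>z\<in>{1..y}. J K z) = 1 - V K y * p_up y + V K (Suc y) * p_down (Suc y) - V K 1 * p_down 1"
proof (induction y rule: nat_induct_at_least)
  case base
  have "J K 1 = V (Suc K) 1 - V K 1" unfolding V_def by simp
  also have "\<dots> = 1 + V K 2 * p_down 2 - (V K 1 * p_up 1 + V K 1 * p_down 1)"
    using V_Suc[of 1 K] V_split[of 1 K] by (simp add: numeral_2_eq_2)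
  finally show ?case by (simp add: numeral_2_eq_2)
next
  case (Suc y)
  have "J K (Suc y) = V (Suc K) (Suc y) - V K (Suc y)" unfolding V_def by simp
  also have "\<dots> = V K y * p_up y + V K (Suc (Suc y)) * p_down (Suc (Suc y))
      - (V K (Suc y) * p_up (Suc y) + V K (Suc y) * p_down (Suc y))"
    using V_Suc[of "Suc y" K] V_split[of "Suc y" K] Suc.hyps by simp
  finally show ?case using Suc.IH Suc.hyps by (simp add: sum.cl_ivl_Suc algebra_simps)
qed

private lemma total_mass_eq: "(\<Sum>z\<in>{1..n}. J K z) = 1 - V K 1 * p_down 1"
  using partial_mass_eq[of n K] n p_up_top V_above_n[of "Suc n" K] by simp

private lemma net_flux_eq:
  assumes "1 \<le> y" "y \<le> n"
  shows "V K y * p_up y - V K (Suc y) * p_down (Suc y) = (\<Sum>z\<in>{Suc y..n}. J K z)"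
proof -
  have "(\<Sum>z\<in>{1..n}. J K z) = (\<Sum>z\<in>{1..y}. J K z) + (\<Sum>z\<in>{Suc y..n}. J K z)"
    using assms by (subst sum.union_disjoint[symmetric]) (auto intro: sum.cong)
  then show ?thesis using partial_mass_eq[OF assms(1), of K] total_mass_eq[of K] by simp
qed

private lemma V_bounded: "\<exists>C. \<forall>K. V K y \<le> C"
proof (cases "1 \<le> y \<and> y \<le> n")
  case False
  then have "y = 0 \<or> n < y" by auto
  then have "V K y = 0" for K
    using V_above_n jump_dist_support unfolding V_def by auto
  then show ?thesis by auto
next
  case True
  have "y \<le> n \<longrightarrow> (\<exists>C. \<forall>K. V K y \<le> C)" if "1 \<le> y" for y
    using that
  proof (induction y rule: nat_induct_at_least)
    case base
    have "V K 1 * p_down 1 \<le> 1" for K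
      using total_mass_eq[of K] jump_dist_nonneg by (metis diff_ge_0_iff_ge sum_nonneg)
    then have "V K 1 \<le> 1 / p_down 1" for K
      using p_down_pos[of 1] n by (simp add: field_simps)
    then show ?case by blast
  next
    case (Suc y)
    show ?case
    proof
      assume le: "Suc y \<le> n"
      then obtain C where C: "\<forall>K. V K y \<le> C" using Suc by auto
      have "V K (Suc y) \<le> C * p_up y / p_down (Suc y)" for K
      proof -
        have "0 \<le> (\<Sum>z\<in>{Suc y..n}. J K z)" using jump_dist_nonneg by (simp add: sum_nonneg)
        then have "V K (Suc y) * p_down (Suc y) \<le> V K y * p_up y"
          using net_flux_eq[of y K] Suc le by simp
        also have "\<dots> \<le> C * p_up y"
          using C p_up_nonneg[of y] Suc le by (intro mult_right_mono) auto
        finally show ?thesis using p_down_pos[of "Suc y"] le by (simp add: field_simps)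
      qed
      then show "\<exists>C. \<forall>K. V K (Suc y) \<le> C" by blast
    qed
  qed
  then show ?thesis using True by blast
qed

private lemma summable_jump_dist: "summable (\<lambda>k. J k y)"
proof -
  obtain C where "\<forall>K. V K y \<le> C" using V_bounded by blast
  then show ?thesis
    using jump_dist_nonneg unfolding V_def by (intro summableI_nonneg_bounded) auto
qed

private definition "visits y = (\<Sum>k. J k y)"

private lemma V_tendsto: "(\<lambda>K. V K y) \<longlonglongrightarrow> visits y"
  unfolding V_def visits_def using summable_LIMSEQ[OF summable_jump_dist] .

private lemma sum_jump_dist_tendsto_0: "(\<lambda>K. \<Sum>z\<in>A. J K z) \<longlonglongrightarrow> 0"
  using tendsto_sum[of A "\<lambda>z K. J K z" "\<lambda>_. 0"] summable_LIMSEQ_zero[OF summable_jump_dist]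
  by simp

private lemma visits_1: "visits 1 * p_down 1 = 1"
proof -
  have "(\<lambda>K. 1 - V K 1 * p_down 1) \<longlonglongrightarrow> 1 - visits 1 * p_down 1"
    by (intro tendsto_intros V_tendsto)
  moreover have "(\<lambda>K. 1 - V K 1 * p_down 1) \<longlonglongrightarrow> 0"
    unfolding total_mass_eq[symmetric] by (rule sum_jump_dist_tendsto_0)
  ultimately show ?thesis using LIMSEQ_unique by fastforce
qed

private lemma visits_Suc:
  assumes "1 \<le> y" "y < n"
  shows "visits (Suc y) * p_down (Suc y) = visits y * p_up y"
proof -
  have "(\<lambda>K. V K y * p_up y - V K (Suc y) * p_down (Suc y))
      \<longlonglongrightarrow> visits y * p_up y - visits (Suc y) * p_down (Suc y)"
    by (intro tendsto_intros V_tendsto)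
  moreover have "(\<lambda>K. V K y * p_up y - V K (Suc y) * p_down (Suc y)) \<longlonglongrightarrow> 0"
    unfolding net_flux_eq[OF assms(1) less_imp_le[OF assms(2)]] by (rule sum_jump_dist_tendsto_0)
  ultimately show ?thesis using LIMSEQ_unique by fastforce
qed

private definition "occupation x = visits x / hold_rate lL g n x"

private lemma occupation_formula:
  "1 \<le> x \<Longrightarrow> x \<le> n \<Longrightarrow>
   real x * occupation x
   = local_ratio lL g n ^ (x - 1) * real ((n - 1) choose (x - 1)) * fact (x - 1) / g"
proof (induction x rule: nat_induct_at_least)
  case base
  have "p_down 1 = g / hold_rate lL g n 1" by (simp add: p_down_def death_rate_def)
  then have "visits 1 * (g / hold_rate lL g n 1) = 1" using visits_1 by (simp only:)
  moreover have "g / hold_rate lL g n 1 \<noteq> 0" using hold_rate_pos[of 1] n g by simp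
  ultimately have "visits 1 = 1 / (g / hold_rate lL g n 1)"
    by (metis nonzero_mult_div_cancel_right)
  then have "visits 1 = hold_rate lL g n 1 / g" by simp
  then show ?case unfolding occupation_def using hold_rate_pos[of 1] n g by simp
next
  case (Suc x)
  let ?q = "hold_rate lL g n" and ?l = "local_ratio lL g n"
  have x: "1 \<le> x" "x < n" using Suc by auto
  have "visits (Suc x) * (g * real (Suc x)) / ?q (Suc x) = visits x * birth_rate lL 0 1 0 n x / ?q x"
    using visits_Suc[OF x] unfolding p_down_def p_up_def death_rate_def by simp
  then have "real (Suc x) * occupation (Suc x) * g = occupation x * birth_rate lL 0 1 0 n x"
    unfolding occupation_def using hold_rate_pos x by (simp add: field_simps)
  also have "\<dots> = (real x * occupation x) * (g * (?l * (real n - real x)))"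
    unfolding birth_rate_def local_ratio_def using g n by (simp add: field_simps)
  finally have step:
    "real (Suc x) * occupation (Suc x) = (real x * occupation x) * (?l * (real n - real x))"
    using g by simp
  have binom: "real ((n - 1) choose (x - 1)) * (real n - real x) = real ((n - 1) choose x) * real x"
    using binomial_Suc_mult_real[of "n - 1" "x - 1"] x by (simp add: of_nat_diff)
  have "real (Suc x) * occupation (Suc x)
      = (?l ^ (x - 1) * ?l) * (real ((n - 1) choose (x - 1)) * (real n - real x)) * fact (x - 1) / g"
    unfolding step Suc.IH[OF less_imp_le[OF x(2)]] by (simp add: algebra_simps)
  also have "\<dots> = ?l ^ x * real ((n - 1) choose x) * (real x * fact (x - 1)) / g"
    unfolding binom using x by (cases x) (simp_all add: algebra_simps)
  also have "\<dots> = ?l ^ (Suc x - 1) * real ((n - 1) choose (Suc x - 1)) * fact (Suc x - 1) / g"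
    using x by (cases x) simp_all
  finally show ?case .
qed

private lemma expected_area_eq_occupation:
  "expected_area lL g n = ennreal (\<Sum>x\<in>{1..n}. real x * occupation x)"
proof -
  let ?q = "hold_rate lL g n"
  define f where "f k x = J k x * real x / ?q x" for k x
  have f_nonneg: "f k x \<ge> 0" for k x
  proof (cases "1 \<le> x \<and> x \<le> n")
    case True
    then show ?thesis unfolding f_def using jump_dist_nonneg hold_rate_pos by (simp add: less_imp_le)
  next
    case False
    then have "x = 0 \<or> n < x" by auto
    then show ?thesis unfolding f_def using jump_dist_above_n by auto
  qed
  have f_big: "f k x = 0" if "n < x \<or> Suc k < x" for k x
    unfolding f_def using jump_dist_above_n jump_dist_above_steps that by auto
  have inner: "(\<Sum>x\<in>{1..Suc k}. ennreal (f k x)) = ennreal (\<Sum>x\<in>{1..n}. f k x)" for k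
  proof -
    have "(\<Sum>x\<in>{1..Suc k}. f k x) = (\<Sum>x\<in>{1..n + Suc k}. f k x)"
      by (rule sum.mono_neutral_left) (auto intro: f_big)
    also have "\<dots> = (\<Sum>x\<in>{1..n}. f k x)"
      by (rule sum.mono_neutral_right) (auto intro: f_big)
    finally have eq: "(\<Sum>x\<in>{1..Suc k}. f k x) = (\<Sum>x\<in>{1..n}. f k x)" .
    have "(\<Sum>x\<in>{1..Suc k}. ennreal (f k x)) = ennreal (\<Sum>x\<in>{1..Suc k}. f k x)"
      using f_nonneg by (intro sum_ennreal)
    then show ?thesis by (simp only: eq)
  qed
  have fsum: "summable (\<lambda>k. f k x)" for x
    unfolding f_def by (intro summable_divide summable_mult2 summable_jump_dist)
  have "expected_area lL g n = (\<Sum>k. ennreal (\<Sum>x\<in>{1..n}. f k x))"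
    unfolding expected_area_def f_def[symmetric] inner ..
  also have "\<dots> = ennreal (\<Sum>k. \<Sum>x\<in>{1..n}. f k x)"
    using f_nonneg fsum by (intro suminf_ennreal2 sum_nonneg summable_sum) auto
  also have "(\<Sum>k. \<Sum>x\<in>{1..n}. f k x) = (\<Sum>x\<in>{1..n}. \<Sum>k. f k x)"
    using fsum by (subst suminf_sum) auto
  also have "\<dots> = (\<Sum>x\<in>{1..n}. real x * occupation x)"
  proof (intro sum.cong refl)
    fix x assume "x \<in> {1..n}"
    have "(\<Sum>k. f k x) = visits x * real x / ?q x"
      unfolding f_def visits_def
      by (simp add: suminf_divide suminf_mult2[symmetric] summable_jump_dist summable_mult2)
    then show "(\<Sum>k. f k x) = real x * occupation x" unfolding occupation_def by simp
  qed
  finally show ?thesis .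
qed

lemma expected_area_eq:
  "expected_area lL g n = ennreal (binom_rising (local_ratio lL g n) (n - 1) 1 / g)"
proof -
  let ?l = "local_ratio lL g n"
  have "(\<Sum>x\<in>{1..n}. real x * occupation x)
      = (\<Sum>x\<in>{1..n}. ?l ^ (x - 1) * real ((n - 1) choose (x - 1)) * fact (x - 1) / g)"
    using occupation_formula by (intro sum.cong) auto
  also have "\<dots> = (\<Sum>j\<le>n - 1. ?l ^ j * real ((n - 1) choose j) * fact j / g)"
  proof -
    have "{1..n} = {Suc 0..Suc (n - 1)}" using n by simp
    then show ?thesis by (simp only: sum.shift_bounds_cl_Suc_ivl atLeast0AtMost) simp
  qed
  also have "\<dots> = binom_rising ?l (n - 1) 1 / g"
    unfolding binom_rising_def pochhammer_fact[symmetric]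
    by (simp add: sum_divide_distrib algebra_simps)
  finally show ?thesis unfolding expected_area_eq_occupation by simp
qed

end

section \<open>The mean-field map\<close>

lemma suminf_less_suminf:
  fixes f g :: "nat \<Rightarrow> real"
  assumes "summable f" "summable g" "\<And>n. f n \<le> g n" "f i < g i"
  shows "suminf f < suminf g"
proof -
  have "0 < (\<Sum>n. g n - f n)"
    using assms by (intro suminf_pos2[of _ i] summable_diff) auto
  also have "\<dots> = suminf g - suminf f" using suminf_diff[OF assms(2,1)] by simp
  finally show ?thesis by simp
qed

lemma hh_mean_0 [simp]: "hh_mean lL lG g pb m 0 = 0"
  by (simp add: hh_mean_def)

locale household_model =
  fixes lL lG g :: real and P :: "nat pmf"
  assumes lL: "lL > 0" and lG: "lG > 0" and g: "g > 0"
    and summable_size: "summable (\<lambda>n. real n * pmf P n)"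
begin

abbreviation scale :: "nat \<Rightarrow> real" where
  "scale n \<equiv> global_scale lL lG (pibar P) n"

text \<open>\<open>hh_ratio m n\<close> is the \<open>n\<close>-th summand of \<mu>bar(m) / m in the overview.\<close>

definition hh_ratio :: "real \<Rightarrow> nat \<Rightarrow> real" where
  "hh_ratio m n = pmf P n * scale n * hh_slope lL g n (scale n * m)"

lemma pibar_eq_suminf: "pibar P = (\<Sum>n. real n * pmf P n)"
proof -
  have "Infinite_Set_Sum.abs_summable_on (\<lambda>x. pmf P x * real x) UNIV"
    unfolding abs_summable_on_nat_iff' using summable_size by (simp add: mult.commute)
  then have "infsetsum (\<lambda>x. pmf P x * real x) UNIV = (\<Sum>n. pmf P n * real n)"
    by (rule infsetsum_nat')
  then show ?thesis unfolding pibar_def pmf_expectation_eq_infsetsum by (simp add: mult.commute)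
qed

lemma scale_nonneg: "scale n \<ge> 0"
  unfolding global_scale_def using lG lL pibar_nonneg[of P] by simp

lemma hh_ratio_size_0 [simp]: "hh_ratio m 0 = 0"
  by (simp add: hh_ratio_def)

lemma mubar_eq_suminf: "m \<ge> 0 \<Longrightarrow> mubar lL lG g P m = (\<Sum>n. m * hh_ratio m n)"
proof -
  assume m: "m \<ge> 0"
  have "(\<Sum>x\<le>n. real x * mu_inf lL lG g P m n x) = m * hh_ratio m n" for n
  proof -
    have "(\<Sum>x\<le>n. real x * mu_inf lL lG g P m n x)
        = (\<Sum>x\<le>n. pmf P n * (real x * stat_weight lL lG g (pibar P) m n x)
            / stat_norm lL lG g (pibar P) m n)"
      unfolding mu_inf_eq_stat_dist[OF less_imp_le[OF lL] less_imp_le[OF lG] g m] stat_dist_def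
      by (intro sum.cong) auto
    also have "\<dots> = pmf P n * hh_mean lL lG g (pibar P) m n"
      unfolding hh_mean_def by (simp add: sum_divide_distrib[symmetric] sum_distrib_left[symmetric])
    also have "\<dots> = m * hh_ratio m n"
      using hh_mean_eq[OF lL g, of n] unfolding hh_ratio_def by (cases "n = 0") (simp_all add: ac_simps)
    finally show ?thesis .
  qed
  then show ?thesis unfolding mubar_def by simp
qed

lemma hh_ratio_nonneg: "m \<ge> 0 \<Longrightarrow> hh_ratio m n \<ge> 0"
  using hh_slope_pos[OF lL g, of n "scale n * m"] scale_nonneg[of n]
  unfolding hh_ratio_def by (cases "n = 0") (simp_all add: less_imp_le)

lemma mult_hh_ratio_le: "m \<ge> 0 \<Longrightarrow> m * hh_ratio m n \<le> real n * pmf P n"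
proof (cases "n = 0")
  case False
  assume "m \<ge> 0"
  then have "scale n * m * hh_slope lL g n (scale n * m) \<le> real n"
    using hh_slope_mult_le[OF lL g, of n "scale n * m"] scale_nonneg[of n] False by simp
  then have "scale n * m * hh_slope lL g n (scale n * m) * pmf P n \<le> real n * pmf P n"
    by (rule mult_right_mono) simp
  then show ?thesis unfolding hh_ratio_def by (simp add: ac_simps)
qed simp

lemma summable_mult_hh_ratio: "m \<ge> 0 \<Longrightarrow> summable (\<lambda>n. m * hh_ratio m n)"
proof -
  assume m: "m \<ge> 0"
  have "norm (m * hh_ratio m n) \<le> real n * pmf P n" for n
    using hh_ratio_nonneg[OF m] mult_hh_ratio_le[OF m] m by simp
  then show ?thesis by (intro summable_comparison_test[OF _ summable_size]) auto
qed

lemma summable_hh_ratio: "m > 0 \<Longrightarrow> summable (hh_ratio m)"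
  using summable_mult[OF summable_mult_hh_ratio, of m "1 / m"] by simp

lemma mubar_eq_mult: "m > 0 \<Longrightarrow> mubar lL lG g P m = m * (\<Sum>n. hh_ratio m n)"
  using mubar_eq_suminf[of m] summable_hh_ratio[of m] by (simp add: suminf_mult)

lemma mubar_0: "mubar lL lG g P 0 = 0"
  using mubar_eq_suminf[of 0] by simp

lemma mubar_le_pibar: "m \<ge> 0 \<Longrightarrow> mubar lL lG g P m \<le> pibar P"
  unfolding mubar_eq_suminf pibar_eq_suminf
  using mult_hh_ratio_le summable_mult_hh_ratio summable_size by (intro suminf_le) auto

lemma hh_ratio_decreasing: "0 \<le> m1 \<Longrightarrow> m1 \<le> m2 \<Longrightarrow> hh_ratio m2 n \<le> hh_ratio m1 n"
  using hh_slope_decreasing[OF lL g, of n "scale n * m1" "scale n * m2"] scale_nonneg[of n]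
  unfolding hh_ratio_def
  by (cases "n = 0") (auto intro!: mult_left_mono mult_nonneg_nonneg)

lemma hh_ratio_strict_decreasing:
  assumes "pibar P > 0" "n \<ge> 1" "pmf P n > 0" "0 \<le> m1" "m1 < m2"
  shows "hh_ratio m2 n < hh_ratio m1 n"
proof -
  have "scale n > 0" using assms lL lG by (simp add: global_scale_def)
  then show ?thesis
    using hh_slope_strict_decreasing[OF lL g, of n "scale n * m1" "scale n * m2"] assms
    unfolding hh_ratio_def by (intro mult_strict_left_mono) auto
qed

lemma exists_household: "pibar P > 0 \<Longrightarrow> \<exists>n\<ge>1. pmf P n > 0"
proof -
  assume "pibar P > 0"
  then obtain i where "0 < real i * pmf P i"
    using suminf_pos_iff[OF summable_size] unfolding pibar_eq_suminf by auto
  then show ?thesis by (intro exI[of _ i]) (auto simp: zero_less_mult_iff)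
qed

lemma continuous_on_hh_ratio: "continuous_on {0..} (\<lambda>m. hh_ratio m n)"
proof (cases "n = 0")
  case False
  have "(\<lambda>m. scale n * m) ` {0..} \<subseteq> {0..}" using scale_nonneg[of n] by auto
  then have "continuous_on {0..} (\<lambda>m. hh_slope lL g n (scale n * m))"
    using False
    by (intro continuous_on_compose2[OF continuous_on_hh_slope[OF lL g]] continuous_intros) auto
  then show ?thesis unfolding hh_ratio_def by (intro continuous_intros)
qed simp

lemma continuous_on_mubar: "continuous_on {0..} (mubar lL lG g P)"
proof -
  have "uniform_limit {0..} (\<lambda>N m. \<Sum>n<N. m * hh_ratio m n) (\<lambda>m. \<Sum>n. m * hh_ratio m n)
      sequentially"
    by (rule Weierstrass_m_test[OF _ summable_size])
      (auto simp: mult_hh_ratio_le hh_ratio_nonneg)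
  then have "continuous_on {0..} (\<lambda>m. \<Sum>n. m * hh_ratio m n)"
    by (rule uniform_limit_theorem[rotated])
      (auto intro!: always_eventually continuous_intros continuous_on_hh_ratio)
  then show ?thesis by (rule continuous_on_cong[THEN iffD1, rotated 2]) (auto simp: mubar_eq_suminf)
qed

lemma R0_eq_suminf: "R0 lL lG g P = (\<Sum>n. ennreal (hh_ratio 0 n))"
proof -
  have "ennreal (lG / pibar P) * (ennreal (real n * pmf P n) * expected_area lL g n)
      = ennreal (hh_ratio 0 n)" for n
  proof (cases "n = 0 \<or> pibar P = 0")
    case True
    \<comment> \<open>if \<open>pibar P = 0\<close>, both sides vanish by the convention \<open>x / 0 = 0\<close>\<close>
    then show ?thesis by (auto simp: hh_ratio_def global_scale_def)
  next
    case False
    then have n: "n \<ge> 1" and pb: "pibar P > 0" using pibar_nonneg[of P] by auto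
    let ?D = "binom_rising (local_ratio lL g n) (n - 1) 1"
    have a: "lG / pibar P \<ge> 0" using lG pb by simp
    have b: "real n * pmf P n \<ge> 0" by simp
    have "?D \<ge> 1"
      using binom_rising_ge_1[of "local_ratio lL g n" 1] local_ratio_pos[OF lL g n] by simp
    then have c: "?D / g \<ge> 0" using g by simp
    have "ennreal (lG / pibar P) * (ennreal (real n * pmf P n) * expected_area lL g n)
        = ennreal (lG / pibar P * (real n * pmf P n) * (?D / g))"
      unfolding expected_area_eq[OF lL g n] ennreal_mult[OF mult_nonneg_nonneg[OF a b] c]
        ennreal_mult[OF a b] by (simp only: mult.assoc)
    also have "lG / pibar P * (real n * pmf P n) * (?D / g) = hh_ratio 0 n"
      unfolding hh_ratio_def mult_zero_right hh_slope_at_0[OF lL g n] global_scale_def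
        local_ratio_def
      using lL g pb n by (simp add: field_simps)
    finally show ?thesis .
  qed
  then show ?thesis unfolding R0_def by (simp flip: ennreal_suminf_cmult)
qed

lemma mubar_less_self:
  assumes R0: "R0 lL lG g P \<le> 1" and m: "m > 0"
  shows "mubar lL lG g P m < m"
proof (cases "pibar P > 0")
  case False
  then show ?thesis using mubar_le_pibar[of m] m by simp
next
  case True
  obtain i where i: "i \<ge> 1" "pmf P i > 0" using exists_household[OF True] by blast
  have summable: "summable (hh_ratio 0)"
    using R0 unfolding R0_eq_suminf
    by (intro summable_suminf_not_top) (auto simp: hh_ratio_nonneg top_unique)
  then have "(\<Sum>n. hh_ratio 0 n) \<le> 1"
    using R0 unfolding R0_eq_suminf by (simp add: suminf_ennreal2 hh_ratio_nonneg)
  moreover have "(\<Sum>n. hh_ratio m n) < (\<Sum>n. hh_ratio 0 n)"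
    using summable summable_hh_ratio[OF m] m True i
    by (intro suminf_less_suminf[where i = i] hh_ratio_decreasing hh_ratio_strict_decreasing) auto
  ultimately show ?thesis using m by (simp add: mubar_eq_mult)
qed

lemma mubar_greater_self_near_0:
  assumes R0: "R0 lL lG g P > 1"
  obtains m where "0 < m" "m \<le> pibar P" "m < mubar lL lG g P m"
proof -
  have pb: "pibar P > 0"
  proof (rule ccontr)
    assume "\<not> pibar P > 0"
    then have "pibar P = 0" using pibar_nonneg[of P] by simp
    then have "hh_ratio 0 n = 0" for n by (simp add: hh_ratio_def global_scale_def)
    then show False using R0 unfolding R0_eq_suminf by simp
  qed
  have "1 < (SUP N. \<Sum>n<N. ennreal (hh_ratio 0 n))"
    using R0 unfolding R0_eq_suminf by (simp add: suminf_eq_SUP)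
  then obtain N where "1 < (\<Sum>n<N. ennreal (hh_ratio 0 n))" by (auto simp: less_SUP_iff)
  then have N: "1 < (\<Sum>n<N. hh_ratio 0 n)" by (simp add: hh_ratio_nonneg)
  have "continuous_on {0..} (\<lambda>m. \<Sum>n<N. hh_ratio m n)"
    by (intro continuous_on_sum continuous_on_hh_ratio)
  then have "((\<lambda>m. \<Sum>n<N. hh_ratio m n) \<longlongrightarrow> (\<Sum>n<N. hh_ratio 0 n)) (at 0 within {0..})"
    by (simp add: continuous_on_def)
  then have "((\<lambda>m. \<Sum>n<N. hh_ratio m n) \<longlongrightarrow> (\<Sum>n<N. hh_ratio 0 n)) (at_right 0)"
    by (rule tendsto_within_subset) auto
  then have "\<forall>\<^sub>F m in at_right 0. 1 < (\<Sum>n<N. hh_ratio m n)"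
    using N by (rule order_tendstoD(1))
  then obtain b where b: "b > 0" "\<forall>m>0. m < b \<longrightarrow> 1 < (\<Sum>n<N. hh_ratio m n)"
    unfolding eventually_at_right[OF pb] by blast
  define m where "m = min (b / 2) (pibar P)"
  have "0 < m" "m < b" "m \<le> pibar P" using b(1) pb by (simp_all add: m_def)
  then have m: "0 < m" "m \<le> pibar P" "1 < (\<Sum>n<N. hh_ratio m n)"
    using b(2) by simp_all
  have "m < m * (\<Sum>n<N. hh_ratio m n)" using m by simp
  also have "\<dots> \<le> m * (\<Sum>n. hh_ratio m n)"
    using m summable_hh_ratio hh_ratio_nonneg by (intro mult_left_mono sum_le_suminf) auto
  also have "\<dots> = mubar lL lG g P m" using m by (simp add: mubar_eq_mult)
  finally show ?thesis using that m by blast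
qed

lemma positive_fixed_point_unique:
  assumes "0 < m1" "mubar lL lG g P m1 = m1" "0 < m2" "mubar lL lG g P m2 = m2"
  shows "m1 = m2"
proof -
  have fixed: "(\<Sum>n. hh_ratio m1 n) = 1" "(\<Sum>n. hh_ratio m2 n) = 1"
    using assms mubar_eq_mult[of m1] mubar_eq_mult[of m2] by simp_all
  have pb: "pibar P > 0" using assms mubar_le_pibar[of m1] by simp
  obtain i where i: "i \<ge> 1" "pmf P i > 0" using exists_household[OF pb] by blast
  have strict: "(\<Sum>n. hh_ratio b n) < (\<Sum>n. hh_ratio a n)" if "0 < a" "a < b" for a b
    using that pb i summable_hh_ratio
    by (intro suminf_less_suminf[where i = i] hh_ratio_decreasing hh_ratio_strict_decreasing) auto
  show ?thesis
  proof (rule ccontr)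
    assume "m1 \<noteq> m2"
    then consider "m1 < m2" | "m2 < m1" by linarith
    then show False using strict[of m1 m2] strict[of m2 m1] assms(1,3) fixed by cases simp_all
  qed
qed

lemma fixed_points_subcritical:
  assumes R0: "R0 lL lG g P \<le> 1"
  shows "{m \<in> {0..pibar P}. mubar lL lG g P m = m} = {0}"
proof -
  have "m = 0" if "0 \<le> m" "mubar lL lG g P m = m" for m
  proof (rule ccontr)
    assume "m \<noteq> 0"
    then have "mubar lL lG g P m < m" using mubar_less_self[OF R0] that(1) by simp
    then show False using that(2) by simp
  qed
  then show ?thesis using mubar_0 pibar_nonneg[of P] by auto
qed

lemma exists_positive_fixed_point:
  assumes R0: "R0 lL lG g P > 1"
  obtains m where "0 < m" "m \<le> pibar P" "mubar lL lG g P m = m"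
proof -
  obtain m0 where m0: "0 < m0" "m0 \<le> pibar P" "m0 < mubar lL lG g P m0"
    using mubar_greater_self_near_0[OF R0] .
  have "continuous_on {m0..pibar P} (\<lambda>m. mubar lL lG g P m - m)"
    using m0 by (intro continuous_intros continuous_on_subset[OF continuous_on_mubar]) auto
  moreover have "mubar lL lG g P (pibar P) - pibar P \<le> 0"
    using mubar_le_pibar[OF pibar_nonneg] by simp
  moreover have "0 \<le> mubar lL lG g P m0 - m0" using m0 by simp
  ultimately obtain m where m: "m0 \<le> m" "m \<le> pibar P" "mubar lL lG g P m - m = 0"
    using IVT2'[of "\<lambda>m. mubar lL lG g P m - m" "pibar P" 0 m0] m0(2) by blast
  then show ?thesis using m0 by (intro that[of m]) auto
qed

end

lemma summable_first_moment:
  fixes p :: "nat \<Rightarrow> real"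
  assumes "\<And>n. p n \<ge> 0" "summable (\<lambda>n. (real n)^2 * p n)"
  shows "summable (\<lambda>n. real n * p n)"
proof (rule summable_comparison_test[OF _ assms(2)])
  have "real n * p n \<le> (real n)^2 * p n" for n
  proof -
    have "real n \<le> (real n)^2" by (cases n) (auto simp: power2_eq_square)
    then show ?thesis using assms(1)[of n] by (rule mult_right_mono)
  qed
  then show "\<exists>N. \<forall>n\<ge>N. norm (real n * p n) \<le> (real n)^2 * p n"
    using assms(1) by auto
qed

theorem corollary7p5:
  fixes lL lG g :: real and P :: "nat pmf"
  assumes "lL > 0" and "lG > 0" and "g > 0"
    and "summable (\<lambda>n. (real n)^2 * pmf P n)"
  shows "(R0 lL lG g P \<le> 1 \<longrightarrow>
            {m \<in> {0..pibar P}. mubar lL lG g P m = m} = {0})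
       \<and> (R0 lL lG g P > 1 \<longrightarrow>
            (\<exists>!m. m \<in> {0<..pibar P} \<and> mubar lL lG g P m = m))"
proof -
  have "summable (\<lambda>n. real n * pmf P n)"
    by (rule summable_first_moment[OF _ assms(4)]) simp
  with assms interpret household_model lL lG g P by unfold_locales
  have "\<exists>!m. m \<in> {0<..pibar P} \<and> mubar lL lG g P m = m" if R0: "R0 lL lG g P > 1"
  proof -
    obtain m where m: "0 < m" "m \<le> pibar P" "mubar lL lG g P m = m"
      using exists_positive_fixed_point[OF R0] .
    show ?thesis
    proof (rule ex1I[of _ m])
      show "m \<in> {0<..pibar P} \<and> mubar lL lG g P m = m" using m by simp
    next
      fix m' assume "m' \<in> {0<..pibar P} \<and> mubar lL lG g P m' = m'"
      then show "m' = m" using positive_fixed_point_unique[of m' m] m by simp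
    qed
  qed
  then show ?thesis using fixed_points_subcritical by blast
qed

end
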